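(* Let $\emptyset\neq H\subset\mathbb R^n$, let $A\colon[0,\infty)\to\mathbb R^{n\times n}$ and $f\colon[0,\infty)\times\mathbb R^n\to\mathbb R^n$ be continuous, and suppose that $x'=A(t)x$ has an exponential contraction or an exponential expansion on $[0,\infty)$ with constants $N,\lambda>0$. Suppose there exist $\delta,L>0$ such that $|f(t,x_1)-f(t,x_2)|\le L|x_1-x_2|$ for all $t\ge0$ and $x_1,x_2\in\mathcal N_\delta(H)$. If $L<\dfrac{\lambda}{N}$, then $x'=A(t)x+f(t,x)$ has the conditional Lipschitz shadowing property in $H$.
   Context: $|\cdot|$ is a fixed norm on $\mathbb R^n$ and also denotes the induced matrix norm. $B_\delta(x)=\{y:|y-x|\le\delta\}$ and $\mathcal N_\delta(H)=\bigcup_{x\in H}B_\delta(x)$. For continuous $g\colon[0,\infty)\times\mathbb R^n\to\mathbb R^n$ and $\tau\in(0,\infty]$, a pseudosolution of $x'=g(t,x)$ on $[0,\tau)$ is a $C^1$ map $y\colon[0,\tau)\to\mathbb R^n$ with $\sigma_y:=\sup_{0\le t<\tau}|y'(t)-g(t,y(t))|<\infty$. The equation has the conditional Lipschitz shadowing property in $H\neq\emptyset$ if there exist $\varepsilon_0,\kappa>0$ such that whenever $0<\varepsilon\le\varepsilon_0$ and $y$ is a pseudosolution on $[0,\tau)$ ($\tau\in(0,\infty]$) with $\sigma_y\le\varepsilon$ and $y(t)\in H$ for all $t\in[0,\tau)$, there is a solution $x$ on $[0,\tau)$ with $\sup_{0\le t<\tau}|x(t)-y(t)|\le\kappa\varepsilon$.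 With $T(t,s)$ the transition matrix of $x'=A(t)x$: an exponential dichotomy on $[0,\infty)$ consists of projections $P(t)$ and constants $N,\lambda>0$ with $P(t)T(t,s)=T(t,s)P(s)$, $|T(t,s)P(s)|\le Ne^{-\lambda(t-s)}$ for $t\ge s\ge0$, and $|T(t,s)(I-P(s))|\le Ne^{-\lambda(s-t)}$ for $0\le t\le s$. It is an exponential contraction if moreover $P(t)=I$ for all $t$, and an exponential expansion if $P(t)=0$ for all $t$. *)

theory Defs
  imports "HOL-Analysis.Analysis"
begin

definition is_norm :: "(real^'n \<Rightarrow> real) \<Rightarrow> bool" where
  "is_norm nrm \<longleftrightarrow>
     (\<forall>x. 0 \<le> nrm x) \<and> (\<forall>x. nrm x = 0 \<longleftrightarrow> x = 0) \<and>
     (\<forall>c x. nrm (c *\<^sub>R x) = \<bar>c\<bar> * nrm x) \<and>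
     (\<forall>x y. nrm (x + y) \<le> nrm x + nrm y)"

definition mnorm :: "(real^'n \<Rightarrow> real) \<Rightarrow> real^'n^'n \<Rightarrow> real" where
  "mnorm nrm M = (SUP x\<in>{x. nrm x = 1}. nrm (M *v x))"

definition nbhd :: "(real^'n \<Rightarrow> real) \<Rightarrow> real \<Rightarrow> (real^'n) set \<Rightarrow> (real^'n) set" where
  "nbhd nrm \<delta> H = {y. \<exists>x\<in>H. nrm (y - x) \<le> \<delta>}"

definition is_transition_matrix ::
  "(real \<Rightarrow> real^'n^'n) \<Rightarrow> (real \<Rightarrow> real \<Rightarrow> real^'n^'n) \<Rightarrow> bool" where
  "is_transition_matrix A T \<longleftrightarrow>
     (\<forall>s\<ge>0. T s s = mat 1 \<and>
        (\<forall>t\<ge>0. ((\<lambda>r. T r s) has_vector_derivative (A t ** T t s)) (at t within {0..})))"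

definition exp_dichotomy ::
  "(real^'n \<Rightarrow> real) \<Rightarrow> (real \<Rightarrow> real \<Rightarrow> real^'n^'n) \<Rightarrow> (real \<Rightarrow> real^'n^'n)
    \<Rightarrow> real \<Rightarrow> real \<Rightarrow> bool" where
  "exp_dichotomy nrm T P N lam \<longleftrightarrow> N > 0 \<and> lam > 0 \<and>
     (\<forall>t\<ge>0. P t ** P t = P t) \<and>
     (\<forall>t\<ge>0. \<forall>s\<ge>0. P t ** T t s = T t s ** P s) \<and>
     (\<forall>t s. 0 \<le> s \<and> s \<le> t \<longrightarrow> mnorm nrm (T t s ** P s) \<le> N * exp (- lam * (t - s))) \<and>
     (\<forall>t s. 0 \<le> t \<and> t \<le> s \<longrightarrow> mnorm nrm (T t s ** (mat 1 - P s)) \<le> N * exp (- lam * (s - t)))"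

definition exp_contraction where
  "exp_contraction nrm T N lam \<longleftrightarrow> exp_dichotomy nrm T (\<lambda>_. mat 1) N lam"

definition exp_expansion where
  "exp_expansion nrm T N lam \<longleftrightarrow> exp_dichotomy nrm T (\<lambda>_. 0) N lam"

definition ival :: "ereal \<Rightarrow> real set" where
  "ival \<tau> = {t. 0 \<le> t \<and> ereal t < \<tau>}"

text \<open>y is a C^1 pseudosolution of x' = g(t,x) on [0,\<tau>) with derivative y' and
  \<sigma>_y \<le> \<epsilon> (the supremum bound written pointwise).\<close>
definition pseudosol_le ::
  "(real^'n \<Rightarrow> real) \<Rightarrow> (real \<Rightarrow> real^'n \<Rightarrow> real^'n) \<Rightarrow> ereal \<Rightarrow> real
    \<Rightarrow> (real \<Rightarrow> real^'n) \<Rightarrow> bool" where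
  "pseudosol_le nrm g \<tau> \<epsilon> y \<longleftrightarrow>
     (\<exists>y'. continuous_on (ival \<tau>) y' \<and>
        (\<forall>t\<in>ival \<tau>. (y has_vector_derivative y' t) (at t within ival \<tau>)) \<and>
        (\<forall>t\<in>ival \<tau>. nrm (y' t - g t (y t)) \<le> \<epsilon>))"

definition is_solution ::
  "(real \<Rightarrow> real^'n \<Rightarrow> real^'n) \<Rightarrow> ereal \<Rightarrow> (real \<Rightarrow> real^'n) \<Rightarrow> bool" where
  "is_solution g \<tau> x \<longleftrightarrow>
     (\<forall>t\<in>ival \<tau>. (x has_vector_derivative g t (x t)) (at t within ival \<tau>))"

definition cond_lip_shadowing ::
  "(real^'n \<Rightarrow> real) \<Rightarrow> (real \<Rightarrow> real^'n \<Rightarrow> real^'n) \<Rightarrow> (real^'n) set \<Rightarrow> bool" where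
  "cond_lip_shadowing nrm g H \<longleftrightarrow>
     (\<exists>\<epsilon>0 \<kappa>. \<epsilon>0 > 0 \<and> \<kappa> > 0 \<and>
        (\<forall>\<epsilon> \<tau> y. 0 < \<epsilon> \<and> \<epsilon> \<le> \<epsilon>0 \<and> \<tau> > 0 \<and> pseudosol_le nrm g \<tau> \<epsilon> y \<and>
            (\<forall>t\<in>ival \<tau>. y t \<in> H) \<longrightarrow>
          (\<exists>x. is_solution g \<tau> x \<and> (\<forall>t\<in>ival \<tau>. nrm (x t - y t) \<le> \<kappa> * \<epsilon>))))"

end

theory Submission
  imports Defs
begin

text \<open>
  Look for the shadowing solution as \<open>x = y + z\<close>. Then \<open>z\<close> must solve \<open>z' = A(t) z + P z\<close> with
  \<open>P z = f(t, y + z) - f(t, y) - (y' - A(t) y - f(t, y))\<close>; on functions with \<open>|z| \<le> R \<le> \<delta>\<close> this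
  forcing is bounded by \<open>L R + \<epsilon>\<close> and is \<open>L\<close>-Lipschitz in \<open>z\<close>. Under an exponential contraction
  the variation-of-constants solution starting at \<open>0\<close>, under an exponential expansion the one whose
  initial value cancels the growing part, is bounded by \<open>N/\<lambda>\<close> times the supremum of the forcing.
  Hence \<open>z\<close> \<mapsto> (this bounded solution with forcing \<open>P z\<close>) maps the ball of radius
  \<open>R = N \<epsilon> / (\<lambda> - N L)\<close> into itself and contracts with factor \<open>N L / \<lambda> < 1\<close>; its fixed point
  gives the shadowing solution, with \<open>\<kappa> = N / (\<lambda> - N L)\<close>.
\<close>

section \<open>Norms on \<open>R^n\<close>\<close>

locale vector_norm =
  fixes nrm :: "real^'n \<Rightarrow> real"
  assumes is_norm: "is_norm nrm"
begin

lemma nrm_nonneg: "0 \<le> nrm x"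
  using is_norm unfolding is_norm_def by blast

lemma nrm_eq_0_iff: "nrm x = 0 \<longleftrightarrow> x = 0"
  using is_norm unfolding is_norm_def by blast

lemma nrm_zero [simp]: "nrm 0 = 0"
  using nrm_eq_0_iff by blast

lemma nrm_pos: "x \<noteq> 0 \<Longrightarrow> 0 < nrm x"
  using nrm_nonneg nrm_eq_0_iff by (metis less_eq_real_def)

lemma nrm_scaleR: "nrm (c *\<^sub>R x) = \<bar>c\<bar> * nrm x"
  using is_norm unfolding is_norm_def by blast

lemma nrm_triangle: "nrm (x + y) \<le> nrm x + nrm y"
  using is_norm unfolding is_norm_def by blast

lemma nrm_minus: "nrm (- x) = nrm x"
  using nrm_scaleR[of "-1" x] by simp

lemma nrm_minus_commute: "nrm (x - y) = nrm (y - x)"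
  using nrm_minus[of "x - y"] by simp

lemma nrm_triangle_diff: "nrm (x - z) \<le> nrm (x - y) + nrm (y - z)"
  using nrm_triangle[of "x - y" "y - z"] by simp

lemma nrm_sum_le: "nrm (sum f S) \<le> (\<Sum>i\<in>S. nrm (f i))"
proof (induction S rule: infinite_finite_induct)
  case (insert x F)
  then show ?case using nrm_triangle[of "f x" "sum f F"] by simp
qed auto

lemma nrm_le_norm: "\<exists>C>0. \<forall>x. nrm x \<le> C * norm x"
proof -
  define C where "C = (\<Sum>b\<in>(Basis::(real^'n) set). nrm b) + 1"
  have "nrm x \<le> C * norm x" for x
  proof -
    have "nrm x = nrm (\<Sum>b\<in>Basis. (x \<bullet> b) *\<^sub>R b)" by (simp add: euclidean_representation)
    also have "\<dots> \<le> (\<Sum>b\<in>Basis. \<bar>x \<bullet> b\<bar> * nrm b)"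
      using nrm_sum_le[of "\<lambda>b. (x \<bullet> b) *\<^sub>R b" Basis] by (simp add: nrm_scaleR)
    also have "\<dots> \<le> (\<Sum>b\<in>Basis. norm x * nrm b)"
      by (intro sum_mono mult_right_mono) (auto simp: Basis_le_norm nrm_nonneg)
    also have "\<dots> \<le> C * norm x" by (simp add: C_def sum_distrib_left algebra_simps)
    finally show ?thesis .
  qed
  moreover have "C > 0" unfolding C_def by (simp add: add_nonneg_pos sum_nonneg nrm_nonneg)
  ultimately show ?thesis by blast
qed

lemma continuous_on_nrm: "continuous_on UNIV nrm"
proof -
  obtain C where C: "C > 0" "\<forall>x. nrm x \<le> C * norm x" using nrm_le_norm by blast
  have "\<bar>nrm x - nrm y\<bar> \<le> C * dist x y" for x y
    using nrm_triangle_diff[of x 0 y] nrm_triangle_diff[of y 0 x] nrm_minus_commute[of x y]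
      C(2)[rule_format, of "x - y"]
    by (auto simp: dist_norm abs_le_iff)
  then show ?thesis
    by (intro lipschitz_on_continuous_on[of C] lipschitz_onI)
       (auto simp: dist_real_def C less_imp_le)
qed

lemma isCont_nrm: "isCont nrm x"
  using continuous_on_nrm continuous_on_eq_continuous_at open_UNIV by blast

lemma continuous_on_nrm_comp: "continuous_on S g \<Longrightarrow> continuous_on S (\<lambda>s. nrm (g s))"
  using continuous_on_compose2[OF continuous_on_nrm _ subset_UNIV] by blast

lemma norm_le_nrm: "\<exists>m>0. \<forall>x. norm x \<le> nrm x / m"
proof -
  have "sphere (0::real^'n) 1 \<noteq> {}"
    using sphere_eq_empty[of "0::real^'n" 1] by simp
  then obtain u where u: "u \<in> sphere 0 1" "\<forall>y\<in>sphere 0 1. nrm u \<le> nrm y"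
    using continuous_attains_inf[OF compact_sphere _ continuous_on_subset[OF continuous_on_nrm]]
    by blast
  have m: "nrm u > 0" using u(1) by (intro nrm_pos) auto
  have "nrm u * norm x \<le> nrm x" for x
  proof (cases "x = 0")
    case False
    hence "nrm u \<le> nrm ((1 / norm x) *\<^sub>R x)" using u by simp
    thus ?thesis using False by (simp add: nrm_scaleR field_simps)
  qed simp
  with m show ?thesis by (intro exI[of _ "nrm u"]) (auto simp: field_simps mult.commute)
qed

lemma nrm_matrix_vector_mult_le: "nrm (M *v x) \<le> mnorm nrm M * nrm x"
proof (cases "x = 0")
  case False
  obtain C where C: "C > 0" "\<forall>x. nrm x \<le> C * norm x" using nrm_le_norm by blast
  obtain m where m: "m > 0" "\<forall>x. norm x \<le> nrm x / m" using norm_le_nrm by blast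
  have bdd: "bdd_above ((\<lambda>u. nrm (M *v u)) ` {u. nrm u = 1})"
  proof (rule bdd_aboveI2)
    fix u assume "u \<in> {u. nrm u = 1}"
    hence "norm u \<le> 1 / m" using m(2)[rule_format, of u] by simp
    have "nrm (M *v u) \<le> C * norm (M *v u)" using C by blast
    also have "\<dots> \<le> C * (onorm ((*v) M) * norm u)"
      using C(1) onorm[OF matrix_vector_mul_bounded_linear, of M u] by (intro mult_left_mono) auto
    also have "\<dots> \<le> C * (onorm ((*v) M) * (1 / m))"
      using \<open>norm u \<le> 1 / m\<close> C(1) onorm_pos_le[OF matrix_vector_mul_bounded_linear]
      by (intro mult_left_mono) auto
    finally show "nrm (M *v u) \<le> C * onorm ((*v) M) * (1 / m)" by (simp add: mult.assoc)
  qed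
  define u where "u = (1 / nrm x) *\<^sub>R x"
  have "nrm u = 1" using nrm_pos[OF False] by (simp add: u_def nrm_scaleR)
  hence "nrm (M *v u) \<le> mnorm nrm M"
    unfolding mnorm_def by (intro cSUP_upper bdd) auto
  moreover have "M *v x = nrm x *\<^sub>R (M *v u)"
    using nrm_pos[OF False] by (simp add: u_def matrix_vector_mult_scaleR)
  ultimately show ?thesis
    using nrm_pos[OF False] by (simp add: nrm_scaleR mult.commute)
qed simp

lemma convex_nrm_less_one: "convex {x. nrm x < 1}"
  unfolding convex_def
proof (intro ballI allI impI, simp)
  fix x y :: "real^'n" and u w :: real
  assume a: "nrm x < 1" "nrm y < 1" "0 \<le> u" "0 \<le> w" "u + w = 1"
  have "nrm (u *\<^sub>R x + w *\<^sub>R y) \<le> u * nrm x + w * nrm y"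
    using nrm_triangle[of "u *\<^sub>R x" "w *\<^sub>R y"] a by (simp add: nrm_scaleR)
  also have "\<dots> < 1"
  proof (cases "u = 0")
    case False
    then have "u * nrm x < u" using a by simp
    moreover have "w * nrm y \<le> w" using a mult_left_mono[of "nrm y" 1 w] by simp
    ultimately show ?thesis using a by simp
  qed (use a in simp)
  finally show "nrm (u *\<^sub>R x + w *\<^sub>R y) < 1" .
qed

text \<open>Finite-dimensional Hahn--Banach: separate the open unit ball from a point of its boundary.\<close>
lemma norming_functional: "\<exists>a. a \<bullet> v = nrm v \<and> (\<forall>x. a \<bullet> x \<le> nrm x)"
proof (cases "v = 0")
  case True
  then show ?thesis using nrm_nonneg by (intro exI[of _ 0]) auto
next
  case False
  define v0 where "v0 = (1 / nrm v) *\<^sub>R v"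
  have v0: "nrm v0 = 1" using nrm_pos[OF False] by (simp add: v0_def nrm_scaleR)
  let ?S = "{x. nrm x < 1}"
  obtain a b where ab: "a \<noteq> 0" "\<forall>x\<in>?S. a \<bullet> x \<le> b" "a \<bullet> v0 \<ge> b"
    using separating_hyperplane_sets[OF convex_nrm_less_one convex_singleton, of v0] v0
    by (fastforce dest: bspec[of _ _ 0])
  have le: "a \<bullet> x \<le> b * nrm x" for x
  proof (cases "x = 0")
    case False
    have "z * ((a \<bullet> x) / nrm x) \<le> b" if "0 < z" "z < 1" for z
    proof -
      have "(z / nrm x) *\<^sub>R x \<in> ?S" using that nrm_pos[OF False] by (simp add: nrm_scaleR)
      thus ?thesis using ab(2) by auto
    qed
    hence "(a \<bullet> x) / nrm x \<le> b" by (rule field_le_mult_one_interval)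
    thus ?thesis using nrm_pos[OF False] by (simp add: field_simps)
  qed (use ab(2) in \<open>auto dest: bspec[of _ _ 0]\<close>)
  have "b > 0"
    using le[of a] ab(1) nrm_pos[of a] by (smt (verit) inner_gt_zero_iff mult_nonpos_nonneg)
  moreover have "a \<bullet> v0 = b" using le[of v0] ab(3) v0 by simp
  ultimately have "((1 / b) *\<^sub>R a) \<bullet> v = nrm v"
    using nrm_pos[OF False] by (simp add: v0_def field_simps)
  moreover have "((1 / b) *\<^sub>R a) \<bullet> x \<le> nrm x" for x
    using le[of x] \<open>b > 0\<close> by (simp add: field_simps)
  ultimately show ?thesis by blast
qed

lemma nrm_has_integral_le:
  assumes "(g has_integral y) S" "((\<lambda>s. nrm (g s)) has_integral r) S"
  shows "nrm y \<le> r"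
proof -
  obtain a where a: "a \<bullet> y = nrm y" "\<forall>x. a \<bullet> x \<le> nrm x" using norming_functional by blast
  have "((\<lambda>s. a \<bullet> g s) has_integral a \<bullet> y) S"
    using has_integral_linear[OF assms(1) bounded_linear_inner_right[of a]] by (simp add: o_def)
  from has_integral_le[OF this assms(2)] a show ?thesis by auto
qed

lemma nrm_integral_le:
  assumes "g integrable_on S" "(\<lambda>s. nrm (g s)) integrable_on S"
  shows "nrm (integral S g) \<le> integral S (\<lambda>s. nrm (g s))"
  using nrm_has_integral_le assms by blast

end

section \<open>A contraction principle for continuous functions\<close>

lemma geometric_tail_le:
  fixes c :: real
  assumes "0 \<le> c" "c < 1"
  shows "(\<Sum>i<j. c ^ (k + i)) \<le> c ^ k / (1 - c)"
proof -
  have "(\<Sum>i<j. c ^ (k + i)) = c ^ k * ((1 - c ^ j) / (1 - c))"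
    using assms by (simp add: power_add sum_distrib_left[symmetric] sum_gp_strict)
  also have "\<dots> \<le> c ^ k * (1 / (1 - c))"
    using assms by (intro mult_left_mono divide_right_mono) auto
  finally show ?thesis by simp
qed

context vector_norm
begin

lemma nrm_geometric_Cauchy:
  assumes c: "0 \<le> c" "c < 1" and step: "\<And>k. nrm (v (Suc k) - v k) \<le> c ^ k * R"
  shows "nrm (v (k + j) - v k) \<le> c ^ k * R / (1 - c)"
proof -
  have "R \<ge> 0" using step[of 0] nrm_nonneg[of "v 1 - v 0"] by simp
  have "nrm (v (k + j) - v k) \<le> R * (\<Sum>i<j. c ^ (k + i))"
  proof (induction j)
    case (Suc j)
    have "nrm (v (k + Suc j) - v k) \<le> nrm (v (Suc (k + j)) - v (k + j)) + nrm (v (k + j) - v k)"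
      using nrm_triangle_diff by simp
    also have "\<dots> \<le> c ^ (k + j) * R + R * (\<Sum>i<j. c ^ (k + i))"
      using step Suc by (rule add_mono)
    finally show ?case by (simp add: algebra_simps)
  qed simp
  also have "\<dots> \<le> c ^ k * R / (1 - c)"
    using mult_left_mono[OF geometric_tail_le[OF c] \<open>R \<ge> 0\<close>] by (simp add: mult.commute)
  finally show ?thesis .
qed

lemma uniform_limit_of_nrm_Cauchy:
  assumes cont: "\<And>k. continuous_on I (zs k)"
    and Cauchy: "\<And>k j t. t \<in> I \<Longrightarrow> nrm (zs (k + j) t - zs k t) \<le> B k"
    and B: "B \<longlonglongrightarrow> 0"
  obtains z where "continuous_on I z" "\<And>k t. t \<in> I \<Longrightarrow> nrm (z t - zs k t) \<le> B k"
proof -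
  obtain m where m: "m > 0" "\<forall>x. norm x \<le> nrm x / m" using norm_le_nrm by blast
  have dist_le: "dist (zs k t) (zs (k + j) t) \<le> B k / m" if "t \<in> I" for k j t
    using m(2)[rule_format, of "zs (k + j) t - zs k t"] Cauchy[OF that, of k j] m(1)
    by (simp add: dist_norm norm_minus_commute) (meson divide_right_mono less_imp_le order.trans)
  have "uniformly_Cauchy_on I zs"
  proof (rule uniformly_Cauchy_onI')
    fix e :: real assume "e > 0"
    have "(\<lambda>k. B k / m) \<longlonglongrightarrow> 0" using tendsto_divide_zero[OF B] .
    from order_tendstoD(2)[OF this \<open>e > 0\<close>] obtain M where M: "\<forall>k\<ge>M. B k / m < e"
      by (auto simp: eventually_sequentially)
    have "dist (zs k t) (zs n t) < e" if "t \<in> I" "M \<le> k" "k < n" for t k n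
      using dist_le[OF that(1), of k "n - k"] M that by force
    then show "\<exists>M. \<forall>t\<in>I. \<forall>k\<ge>M. \<forall>n>k. dist (zs k t) (zs n t) < e" by blast
  qed
  then obtain z where lim: "uniform_limit I zs z sequentially"
    using Cauchy_uniformly_convergent uniformly_convergent_on_def by blast
  have "continuous_on I z"
    using uniform_limit_theorem[OF _ lim] cont by simp
  moreover have "nrm (z t - zs k t) \<le> B k" if t: "t \<in> I" for k t
  proof -
    have "(\<lambda>j. zs (k + j) t) \<longlonglongrightarrow> z t"
      using LIMSEQ_ignore_initial_segment[OF tendsto_uniform_limitI[OF lim t], of k]
      by (simp add: add.commute)
    hence "(\<lambda>j. nrm (zs (k + j) t - zs k t)) \<longlonglongrightarrow> nrm (z t - zs k t)"
      by (intro isCont_tendsto_compose[OF isCont_nrm] tendsto_intros)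
    thus ?thesis by (rule LIMSEQ_le_const2) (use Cauchy t in auto)
  qed
  ultimately show ?thesis using that by blast
qed

lemma contraction_fixpoint:
  assumes c: "0 \<le> c" "c < 1" and R: "0 \<le> R"
    and maps_into: "\<And>z. continuous_on I z \<Longrightarrow> \<forall>t\<in>I. nrm (z t) \<le> R \<Longrightarrow>
          continuous_on I (\<Phi> z) \<and> (\<forall>t\<in>I. nrm (\<Phi> z t) \<le> R)"
    and contraction: "\<And>z w d. continuous_on I z \<Longrightarrow> \<forall>t\<in>I. nrm (z t) \<le> R \<Longrightarrow>
          continuous_on I w \<Longrightarrow> \<forall>t\<in>I. nrm (w t) \<le> R \<Longrightarrow> \<forall>t\<in>I. nrm (z t - w t) \<le> d \<Longrightarrow>
          \<forall>t\<in>I. nrm (\<Phi> z t - \<Phi> w t) \<le> c * d"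
  obtains z where "continuous_on I z" "\<forall>t\<in>I. nrm (z t) \<le> R" "\<forall>t\<in>I. \<Phi> z t = z t"
proof -
  define zs where "zs k = (\<Phi> ^^ k) (\<lambda>_. 0)" for k
  have zs_Suc: "zs (Suc k) = \<Phi> (zs k)" for k by (simp add: zs_def)
  have zs_ball: "continuous_on I (zs k) \<and> (\<forall>t\<in>I. nrm (zs k t) \<le> R)" for k
    by (induction k) (use R maps_into in \<open>simp_all add: zs_def\<close>)
  have step: "\<forall>t\<in>I. nrm (zs (Suc k) t - zs k t) \<le> c ^ k * R" for k
  proof (induction k)
    case 0 thus ?case using zs_ball[of 1] by (simp add: zs_def)
  next
    case (Suc k)
    have "\<forall>t\<in>I. nrm (\<Phi> (zs (Suc k)) t - \<Phi> (zs k) t) \<le> c * (c ^ k * R)"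
      by (rule contraction) (use zs_ball Suc in auto)
    thus ?case by (simp add: zs_Suc[symmetric] mult.assoc)
  qed
  define B where "B k = c ^ k * R / (1 - c)" for k
  have Cauchy: "nrm (zs (k + j) t - zs k t) \<le> B k" if "t \<in> I" for k j t
    unfolding B_def by (rule nrm_geometric_Cauchy[OF c]) (use step that in blast)
  have B: "B \<longlonglongrightarrow> 0"
    unfolding B_def using c by (auto intro!: tendsto_eq_intros LIMSEQ_power_zero)
  obtain z where z_cont: "continuous_on I z" and z_near: "\<And>k t. t \<in> I \<Longrightarrow> nrm (z t - zs k t) \<le> B k"
    using uniform_limit_of_nrm_Cauchy[of I zs B] zs_ball Cauchy B by blast
  have z_le: "\<forall>t\<in>I. nrm (z t) \<le> R"
  proof
    fix t assume t: "t \<in> I"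
    have "nrm (z t) \<le> R + B k" for k
      using nrm_triangle_diff[of "z t" 0 "zs k t"] z_near[OF t, of k] zs_ball[of k] t by force
    moreover have "(\<lambda>k. R + B k) \<longlonglongrightarrow> R" using tendsto_add[OF tendsto_const B] by simp
    ultimately show "nrm (z t) \<le> R" by (intro LIMSEQ_le_const) auto
  qed
  have "\<Phi> z t = z t" if t: "t \<in> I" for t
  proof -
    have "nrm (\<Phi> z t - z t) \<le> c * B k + B (Suc k)" for k
    proof -
      have "nrm (\<Phi> z t - \<Phi> (zs k) t) \<le> c * B k"
        using contraction[OF z_cont z_le, of "zs k" "B k"] zs_ball z_near t by blast
      moreover have "nrm (zs (Suc k) t - z t) \<le> B (Suc k)"
        using z_near[OF t, of "Suc k"] by (simp add: nrm_minus_commute)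
      ultimately show ?thesis
        using nrm_triangle_diff[of "\<Phi> z t" "z t" "\<Phi> (zs k) t"] by (simp add: zs_Suc)
    qed
    moreover have "(\<lambda>k. c * B k + B (Suc k)) \<longlonglongrightarrow> 0"
      using tendsto_add[OF tendsto_mult_right_zero[OF B] B[THEN LIMSEQ_Suc]] by simp
    ultimately have "nrm (\<Phi> z t - z t) \<le> 0" by (intro LIMSEQ_le_const) auto
    thus ?thesis using nrm_nonneg nrm_eq_0_iff by (metis antisym eq_iff_diff_eq_0)
  qed
  then show ?thesis using that z_cont z_le by blast
qed

end

section \<open>Exponentially dominated integrals\<close>

lemma ival_subset: "ival \<tau> \<subseteq> {0..}"
  unfolding ival_def by auto

lemma ival_downward_closed: "t \<in> ival \<tau> \<Longrightarrow> 0 \<le> s \<Longrightarrow> s \<le> t \<Longrightarrow> s \<in> ival \<tau>"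
  unfolding ival_def using order.strict_trans1[of "ereal s" "ereal t" \<tau>] by auto

lemma ival_atLeastAtMost_subset: "t \<in> ival \<tau> \<Longrightarrow> {0..t} \<subseteq> ival \<tau>"
  using ival_downward_closed by auto

lemma ival_open_above: "t \<in> ival \<tau> \<Longrightarrow> \<exists>b>t. b \<in> ival \<tau>"
  unfolding ival_def using ereal_dense2 by (fastforce simp: less_imp_le)

lemma ival_sets_lebesgue: "ival \<tau> \<in> sets lebesgue"
proof -
  have "ival \<tau> \<in> sets borel" unfolding ival_def by measurable
  thus ?thesis by (metis sets_completionI_sets sets_lborel)
qed

lemma exp_decay_integrable_on:
  fixes lam a C :: real
  assumes "S \<in> sets lebesgue" "S \<subseteq> {a..}" "lam > 0" "C \<ge> 0"
  shows "(\<lambda>s. C * exp (- lam * (s - a))) integrable_on S"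
    and "integral S (\<lambda>s. C * exp (- lam * (s - a))) \<le> C / lam"
proof -
  let ?E = "\<lambda>s. C * exp (- lam * (s - a))"
  have "((\<lambda>s. C * exp (lam * a) * exp (- lam * s)) has_integral
      C * exp (lam * a) * (exp (- lam * a) / lam)) {a..}"
    using has_integral_mult_right[OF has_integral_exp_minus_to_infinity[OF \<open>lam > 0\<close>]] .
  hence on_ray: "(?E has_integral C / lam) {a..}"
    by (simp add: exp_minus_inverse exp_add[symmetric] algebra_simps)
  hence "?E absolutely_integrable_on {a..}"
    using \<open>C \<ge> 0\<close> by (intro nonnegative_absolutely_integrable_1) auto
  hence "?E absolutely_integrable_on S"
    by (rule set_integrable_subset) (use assms in auto)
  thus integrable: "?E integrable_on S"
    using absolutely_integrable_on_def by blast
  have "integral S ?E \<le> integral {a..} ?E"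
    using assms on_ray integrable by (intro integral_subset_le) auto
  thus "integral S ?E \<le> C / lam" using integral_unique[OF on_ray] by linarith
qed

lemma exp_growth_integral_atLeastAtMost:
  fixes lam t :: real
  assumes "lam > 0" "t \<ge> 0"
  shows "((\<lambda>s. exp (- lam * (t - s))) has_integral (1 - exp (- lam * t)) / lam) {0..t}"
proof -
  have "((\<lambda>s. exp (- lam * (t - s))) has_integral
      exp (- lam * (t - t)) / lam - exp (- lam * (t - 0)) / lam) {0..t}"
  proof (rule fundamental_theorem_of_calculus)
    fix x assume "x \<in> {0..t}"
    have "((\<lambda>s. exp (- lam * (t - s)) / lam) has_real_derivative exp (- lam * (t - x)))
        (at x within {0..t})"
      using assms by (auto intro!: derivative_eq_intros)
    thus "((\<lambda>s. exp (- lam * (t - s)) / lam) has_vector_derivative exp (- lam * (t - x)))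
        (at x within {0..t})"
      by (simp add: has_real_derivative_iff_has_vector_derivative)
  qed (use assms in auto)
  thus ?thesis by (simp add: diff_divide_distrib)
qed

context vector_norm
begin

lemma integrable_dominated_nrm:
  assumes S: "S \<in> sets lebesgue" and H: "continuous_on S H" and E: "E integrable_on S"
    and bound: "\<And>s. s \<in> S \<Longrightarrow> nrm (H s) \<le> E s"
  shows "H integrable_on S" and "nrm (integral S H) \<le> integral S E"
proof -
  obtain m where m: "m > 0" "\<forall>x. norm x \<le> nrm x / m" using norm_le_nrm by blast
  show H_int: "H integrable_on S"
  proof (rule measurable_bounded_by_integrable_imp_integrable[OF _ _ _ S])
    show "H \<in> borel_measurable (lebesgue_on S)"
      by (rule continuous_imp_measurable_on_sets_lebesgue[OF H S])
    show "(\<lambda>s. E s / m) integrable_on S" using integrable_on_divide[OF E] .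
    show "norm (H s) \<le> E s / m" if "s \<in> S" for s
      using m bound[OF that] by (meson divide_right_mono less_imp_le order.trans)
  qed
  have "(\<lambda>s. nrm (H s)) integrable_on S"
  proof (rule measurable_bounded_by_integrable_imp_integrable[OF _ E _ S])
    show "(\<lambda>s. nrm (H s)) \<in> borel_measurable (lebesgue_on S)"
      by (rule continuous_imp_measurable_on_sets_lebesgue[OF continuous_on_nrm_comp[OF H] S])
  qed (use bound nrm_nonneg in auto)
  with H_int have "nrm (integral S H) \<le> integral S (\<lambda>s. nrm (H s))"
    by (rule nrm_integral_le)
  also have "\<dots> \<le> integral S E"
    using \<open>(\<lambda>s. nrm (H s)) integrable_on S\<close> E bound by (rule integral_le)
  finally show "nrm (integral S H) \<le> integral S E" .
qed

end

section \<open>Transition matrices\<close>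

lemma bounded_bilinear_matrix_matrix_mult:
  "bounded_bilinear ((**) :: real^'n^'n \<Rightarrow> real^'n^'n \<Rightarrow> real^'n^'n)"
  by (rule bilinear_conv_bounded_bilinear[THEN iffD1], unfold bilinear_def)
     (auto intro!: linearI simp: vec_eq_iff matrix_matrix_mult_def sum.distrib algebra_simps
       sum_distrib_left)

lemma bounded_bilinear_matrix_vector_mult:
  "bounded_bilinear ((*v) :: real^'n^'n \<Rightarrow> real^'n \<Rightarrow> real^'n)"
  by (rule bilinear_conv_bounded_bilinear[THEN iffD1], unfold bilinear_def)
     (auto intro!: linearI simp: vec_eq_iff matrix_vector_mult_def sum.distrib algebra_simps
       sum_distrib_left)

lemma exp_weighted_le:
  fixes \<phi> D :: "real \<Rightarrow> real"
  assumes "a \<le> b"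
    and deriv: "\<And>s. s \<in> {a..b} \<Longrightarrow> (\<phi> has_real_derivative D s) (at s within {a..b})"
    and bound: "\<And>s. s \<in> {a..b} \<Longrightarrow> D s \<le> k * \<phi> s"
  shows "exp (- k * b) * \<phi> b \<le> exp (- k * a) * \<phi> a"
proof -
  define D' where "D' s = exp (- k * s) * D s - k * exp (- k * s) * \<phi> s" for s
  have "\<exists>x\<in>{a..b}. exp (- k * b) * \<phi> b - exp (- k * a) * \<phi> a = (\<lambda>h. D' x * h) (b - a)"
  proof (rule mvt_very_simple[OF \<open>a \<le> b\<close>])
    fix x assume "a \<le> x" "x \<le> b"
    with deriv[of x]
    have "((\<lambda>s. exp (- k * s) * \<phi> s) has_real_derivative D' x) (at x within {a..b})"
      unfolding D'_def by (auto intro!: derivative_eq_intros simp: algebra_simps)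
    thus "((\<lambda>s. exp (- k * s) * \<phi> s) has_derivative (\<lambda>h. D' x * h)) (at x within {a..b})"
      by (simp add: has_field_derivative_def mult_commute_abs)
  qed
  moreover have "D' x \<le> 0" if "x \<in> {a..b}" for x
    using bound[OF that] by (simp add: D'_def algebra_simps)
  ultimately obtain x where "x \<in> {a..b}" "D' x \<le> 0"
      "exp (- k * b) * \<phi> b - exp (- k * a) * \<phi> a = D' x * (b - a)"
    by auto
  moreover have "D' x * (b - a) \<le> 0"
    using \<open>D' x \<le> 0\<close> \<open>a \<le> b\<close> by (simp add: mult_nonpos_nonneg)
  ultimately show ?thesis by linarith
qed

text \<open>Gronwall: if \<open>|\<phi>'| \<le> k \<phi>\<close>, then \<open>exp (-k s) \<phi> s\<close> does not increase and \<open>exp (k s) \<phi> s\<close> does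
  not decrease, so a zero of \<open>\<phi>\<close> propagates in both directions.\<close>
lemma abs_deriv_le_mult_vanishing:
  fixes \<phi> D :: "real \<Rightarrow> real"
  assumes deriv: "\<And>s. s \<in> {a..b} \<Longrightarrow> (\<phi> has_real_derivative D s) (at s within {a..b})"
    and bound: "\<And>s. s \<in> {a..b} \<Longrightarrow> \<bar>D s\<bar> \<le> k * \<phi> s"
    and "r \<in> {a..b}" "\<phi> r = 0" "t \<in> {a..b}"
  shows "\<phi> t \<le> 0"
proof (cases "r \<le> t")
  case True
  have sub: "{r..t} \<subseteq> {a..b}" using assms(3,5) by auto
  have "exp (- k * t) * \<phi> t \<le> exp (- k * r) * \<phi> r"
  proof (rule exp_weighted_le[OF True])
    fix s assume s: "s \<in> {r..t}"
    with sub show "(\<phi> has_real_derivative D s) (at s within {r..t})"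
      using DERIV_subset[OF deriv sub] by blast
    show "D s \<le> k * \<phi> s" using bound[of s] s sub by auto
  qed
  thus ?thesis using \<open>\<phi> r = 0\<close> by (simp add: mult_le_0_iff)
next
  case False
  have sub: "{t..r} \<subseteq> {a..b}" using assms(3,5) by auto
  have "exp (- (- k) * r) * - \<phi> r \<le> exp (- (- k) * t) * - \<phi> t"
  proof (rule exp_weighted_le)
    show "t \<le> r" using False by simp
    fix s assume s: "s \<in> {t..r}"
    with sub show "((\<lambda>s. - \<phi> s) has_real_derivative - D s) (at s within {t..r})"
      using DERIV_minus[OF DERIV_subset[OF deriv sub]] by blast
    show "- D s \<le> - k * - \<phi> s" using bound[of s] s sub by auto
  qed
  thus ?thesis using \<open>\<phi> r = 0\<close> by (simp add: mult_le_0_iff)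
qed

text \<open>Continuity of a pointwise inverse follows from
  \<open>V s - V s\<^sub>0 = V s (U s\<^sub>0 - U s) V s\<^sub>0\<close>, once \<open>V s\<close> is seen to stay bounded near \<open>s\<^sub>0\<close>.\<close>
lemma continuous_within_matrix_inverse:
  fixes U V :: "'a::t2_space \<Rightarrow> real^'n^'n"
  assumes U: "continuous (at s0 within S) U" and "s0 \<in> S"
    and inv: "\<And>s. s \<in> S \<Longrightarrow> V s ** U s = mat 1" "\<And>s. s \<in> S \<Longrightarrow> U s ** V s = mat 1"
  shows "continuous (at s0 within S) V"
proof -
  obtain K where K: "K > 0"
    "\<forall>(a :: real^'n^'n) (b :: real^'n^'n). norm (a ** b) \<le> norm a * norm b * K"
    using bounded_bilinear.pos_bounded[OF bounded_bilinear_matrix_matrix_mult] by blast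
  define c where "c = norm (V s0) * K * K"
  have c: "c \<ge> 0" unfolding c_def using K(1) by simp
  have diff_le: "norm (V s - V s0) \<le> norm (V s) * (c * norm (U s0 - U s))" if "s \<in> S" for s
  proof -
    have "V s ** (U s0 - U s) ** V s0 = V s ** (U s0 ** V s0) - (V s ** U s) ** V s0"
      by (simp only: bounded_bilinear.diff_left[OF bounded_bilinear_matrix_matrix_mult]
          bounded_bilinear.diff_right[OF bounded_bilinear_matrix_matrix_mult] matrix_mul_assoc)
    also have "\<dots> = V s - V s0" using inv that \<open>s0 \<in> S\<close> by simp
    finally have "V s - V s0 = V s ** (U s0 - U s) ** V s0" ..
    hence "norm (V s - V s0) \<le> norm (V s ** (U s0 - U s)) * norm (V s0) * K"
      using K(2) by simp
    also have "\<dots> \<le> (norm (V s) * norm (U s0 - U s) * K) * norm (V s0) * K"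
      using K by (intro mult_right_mono) auto
    finally show ?thesis by (simp add: c_def algebra_simps)
  qed
  have U_lim: "((\<lambda>s. U s0 - U s) \<longlongrightarrow> 0) (at s0 within S)"
    using tendsto_diff[OF tendsto_const U[unfolded continuous_within], of "U s0"] by simp
  have "((\<lambda>s. c * norm (U s0 - U s)) \<longlongrightarrow> 0) (at s0 within S)"
    using tendsto_mult_right_zero[OF tendsto_norm_zero[OF U_lim]] .
  from order_tendstoD(2)[OF this, of "1 / 2"]
  have small: "\<forall>\<^sub>F s in at s0 within S. c * norm (U s0 - U s) < 1 / 2" by simp
  have "\<forall>\<^sub>F s in at s0 within S. s \<in> S" by (simp add: eventually_at_filter)
  with small
  have "\<forall>\<^sub>F s in at s0 within S. norm (V s - V s0) \<le> 2 * norm (V s0) * (c * norm (U s0 - U s))"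
  proof eventually_elim
    case (elim s)
    have "norm (V s) * (c * norm (U s0 - U s)) \<le> norm (V s) * (1 / 2)"
      using elim(1) by (intro mult_left_mono) auto
    with diff_le[OF elim(2)] have "norm (V s) \<le> 2 * norm (V s0)"
      using norm_triangle_sub[of "V s" "V s0"] by simp
    then have "norm (V s) * (c * norm (U s0 - U s)) \<le> 2 * norm (V s0) * (c * norm (U s0 - U s))"
      using c by (intro mult_right_mono) auto
    with diff_le[OF elim(2)] show ?case by simp
  qed
  moreover have "((\<lambda>s. 2 * norm (V s0) * (c * norm (U s0 - U s))) \<longlongrightarrow> 0) (at s0 within S)"
    using tendsto_mult_right_zero[OF tendsto_mult_right_zero[OF tendsto_norm_zero[OF U_lim]]] .
  ultimately have "((\<lambda>s. V s - V s0) \<longlongrightarrow> 0) (at s0 within S)"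
    by (rule Lim_null_comparison)
  from tendsto_add[OF this tendsto_const[of "V s0"]] show ?thesis
    unfolding continuous_within by simp
qed

locale linear_system =
  fixes A :: "real \<Rightarrow> real^'n^'n" and T :: "real \<Rightarrow> real \<Rightarrow> real^'n^'n"
  assumes transition: "is_transition_matrix A T"
    and continuous_coefficient: "continuous_on {0..} A"
begin

lemma transition_diag: "s \<ge> 0 \<Longrightarrow> T s s = mat 1"
  using transition unfolding is_transition_matrix_def by blast

lemma transition_deriv:
  "s \<ge> 0 \<Longrightarrow> t \<ge> 0 \<Longrightarrow> ((\<lambda>r. T r s) has_vector_derivative (A t ** T t s)) (at t within {0..})"
  using transition unfolding is_transition_matrix_def by blast

lemma linear_ode_zero_unique:
  fixes X :: "real \<Rightarrow> real^'n^'n"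
  assumes X': "\<And>t. t \<ge> 0 \<Longrightarrow> (X has_vector_derivative (A t ** X t)) (at t within {0..})"
    and "r \<ge> 0" "X r = 0" "t \<ge> 0"
  shows "X t = 0"
proof -
  define b where "b = max r t"
  have "bounded (A ` {0..b})"
    using continuous_on_subset[OF continuous_coefficient, of "{0..b}"]
    by (intro compact_imp_bounded compact_continuous_image) auto
  then obtain KA where KA: "\<forall>s\<in>{0..b}. norm (A s) \<le> KA" unfolding bounded_iff by blast
  obtain K where K: "K > 0"
    "\<forall>(a :: real^'n^'n) (b :: real^'n^'n). norm (a ** b) \<le> norm a * norm b * K"
    using bounded_bilinear.pos_bounded[OF bounded_bilinear_matrix_matrix_mult] by blast
  define \<phi> where "\<phi> s = X s \<bullet> X s" for s
  define D where "D s = 2 * (X s \<bullet> (A s ** X s))" for s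
  have "(\<phi> has_real_derivative D s) (at s within {0..b})" if "s \<in> {0..b}" for s
  proof -
    from bounded_bilinear.has_vector_derivative[OF bounded_bilinear_inner X' X'] that
    have "(\<phi> has_real_derivative D s) (at s within {0..})"
      unfolding \<phi>_def D_def has_real_derivative_iff_has_vector_derivative
      by (simp add: inner_commute)
    thus ?thesis by (rule DERIV_subset) auto
  qed
  moreover have "\<bar>D s\<bar> \<le> (2 * KA * K) * \<phi> s" if "s \<in> {0..b}" for s
  proof -
    have "norm (A s) * norm (X s) * K \<le> KA * norm (X s) * K"
      using K(1) KA that by (intro mult_right_mono) auto
    hence "norm (A s ** X s) \<le> KA * norm (X s) * K"
      using K(2)[rule_format, of "A s" "X s"] by linarith
    hence "\<bar>X s \<bullet> (A s ** X s)\<bar> \<le> norm (X s) * (KA * norm (X s) * K)"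
      by (meson Cauchy_Schwarz_ineq2 mult_left_mono norm_ge_zero order.trans)
    thus ?thesis by (simp add: D_def \<phi>_def power2_norm_eq_inner[symmetric] power2_eq_square
        algebra_simps)
  qed
  ultimately have "\<phi> t \<le> 0"
    by (rule abs_deriv_le_mult_vanishing) (use assms in \<open>auto simp: b_def \<phi>_def\<close>)
  thus ?thesis unfolding \<phi>_def by (metis antisym inner_eq_zero_iff inner_ge_zero)
qed

lemma transition_cocycle:
  assumes "t \<ge> 0" "r \<ge> 0" "s \<ge> 0"
  shows "T t s = T t r ** T r s"
proof -
  define X where "X t = T t s - T t r ** T r s" for t
  have "(X has_vector_derivative (A u ** X u)) (at u within {0..})" if "u \<ge> 0" for u
  proof -
    have "((\<lambda>t. T t r ** T r s) has_vector_derivative (A u ** T u r) ** T r s) (at u within {0..})"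
      using bounded_bilinear.has_vector_derivative[OF bounded_bilinear_matrix_matrix_mult
          transition_deriv[OF assms(2) that] has_vector_derivative_const] by simp
    from has_vector_derivative_diff[OF transition_deriv[OF assms(3) that] this]
    show ?thesis unfolding X_def by (simp add: matrix_mul_assoc
        bounded_bilinear.diff_right[OF bounded_bilinear_matrix_matrix_mult])
  qed
  moreover have "X r = 0" using transition_diag[OF assms(2)] by (simp add: X_def)
  ultimately have "X t = 0" using linear_ode_zero_unique assms by blast
  thus ?thesis unfolding X_def by simp
qed

lemma transition_inverse: "t \<ge> 0 \<Longrightarrow> s \<ge> 0 \<Longrightarrow> T t s ** T s t = mat 1"
  using transition_cocycle[of t s t] transition_diag[of t] by simp

lemma continuous_on_transition: "s \<ge> 0 \<Longrightarrow> continuous_on {0..} (\<lambda>t. T t s)"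
  unfolding continuous_on_eq_continuous_within
  using has_vector_derivative_continuous[OF transition_deriv] by blast

lemma continuous_on_transition_from_0: "continuous_on {0..} (\<lambda>s. T 0 s)"
  unfolding continuous_on_eq_continuous_within
proof
  fix s0 :: real assume "s0 \<in> {0..}"
  have "continuous (at s0 within {0..}) (\<lambda>t. T t 0)"
    using continuous_on_transition[of 0] \<open>s0 \<in> {0..}\<close>
    unfolding continuous_on_eq_continuous_within by simp
  from this \<open>s0 \<in> {0..}\<close> show "continuous (at s0 within {0..}) (\<lambda>s. T 0 s)"
    by (rule continuous_within_matrix_inverse[where U = "\<lambda>t. T t 0"])
       (simp_all add: transition_inverse)
qed

end

section \<open>Variation of constants\<close>

text \<open>The solution of \<open>x' = A(t) x + G(t)\<close> with \<open>x(0) = -\<xi>\<close>; the sign lets the expansion case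
  take \<open>\<xi> = \<integral>\<^sub>I T(0,s) G(s) ds\<close>.\<close>
definition variation_of_constants ::
  "(real \<Rightarrow> real \<Rightarrow> real^'n^'n) \<Rightarrow> real^'n \<Rightarrow> (real \<Rightarrow> real^'n) \<Rightarrow> real \<Rightarrow> real^'n" where
  "variation_of_constants T \<xi> G t = T t 0 *v (integral {0..t} (\<lambda>s. T 0 s *v G s) - \<xi>)"

context linear_system
begin

lemma continuous_on_transition_mult:
  assumes "t \<ge> 0" "continuous_on S G" "S \<subseteq> {0..}"
  shows "continuous_on S (\<lambda>s. T t s *v G s)"
proof -
  have "continuous_on S (\<lambda>s. T t 0 *v (T 0 s *v G s))"
    using assms continuous_on_subset[OF continuous_on_transition_from_0]
    by (intro bounded_bilinear.continuous_on[OF bounded_bilinear_matrix_vector_mult]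
        continuous_on_const) auto
  moreover have "T t 0 *v (T 0 s *v G s) = T t s *v G s" if "s \<in> S" for s
    using transition_cocycle[of t 0 s] that assms by (auto simp: matrix_vector_mul_assoc)
  ultimately show ?thesis using continuous_on_cong by force
qed

lemma has_vector_derivative_variation_of_constants:
  assumes G: "continuous_on (ival \<tau>) G" and t: "t \<in> ival \<tau>"
  shows "(variation_of_constants T \<xi> G has_vector_derivative
      A t *v variation_of_constants T \<xi> G t + G t) (at t within ival \<tau>)"
proof -
  obtain b where b: "t < b" "b \<in> ival \<tau>" using ival_open_above[OF t] by blast
  have "t \<ge> 0" using t ival_subset by auto
  have "continuous_on {0..b} (\<lambda>s. T 0 s *v G s)"
    using continuous_on_subset[OF G ival_atLeastAtMost_subset[OF b(2)]]
    by (intro continuous_on_transition_mult) auto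
  from integral_has_vector_derivative[OF this] \<open>t \<ge> 0\<close> b(1)
  have "((\<lambda>u. integral {0..u} (\<lambda>s. T 0 s *v G s)) has_vector_derivative T 0 t *v G t)
      (at t within {0..b})" by simp
  moreover have "at t within {0..b} = at t within ival \<tau>"
    by (rule at_within_nhd[of _ "{..<b}"])
       (use b ival_downward_closed[OF b(2)] in \<open>auto simp: ival_def\<close>)
  ultimately have W: "((\<lambda>u. integral {0..u} (\<lambda>s. T 0 s *v G s) - \<xi>) has_vector_derivative
      T 0 t *v G t) (at t within ival \<tau>)"
    using has_vector_derivative_diff[OF _ has_vector_derivative_const] by fastforce
  have U: "((\<lambda>u. T u 0) has_vector_derivative A t ** T t 0) (at t within ival \<tau>)"
    using has_vector_derivative_within_subset[OF transition_deriv[of 0 t] ival_subset] \<open>t \<ge> 0\<close>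
    by simp
  have "(variation_of_constants T \<xi> G has_vector_derivative
      T t 0 *v (T 0 t *v G t) + (A t ** T t 0) *v (integral {0..t} (\<lambda>s. T 0 s *v G s) - \<xi>))
      (at t within ival \<tau>)"
    unfolding variation_of_constants_def[abs_def]
    by (rule bounded_bilinear.has_vector_derivative[OF bounded_bilinear_matrix_vector_mult U W])
  moreover have "T t 0 *v (T 0 t *v G t) = G t"
    using transition_inverse[OF \<open>t \<ge> 0\<close>, of 0] by (simp add: matrix_vector_mul_assoc)
  ultimately show ?thesis
    by (simp add: variation_of_constants_def matrix_vector_mul_assoc add.commute)
qed

lemma continuous_on_variation_of_constants:
  "continuous_on (ival \<tau>) G \<Longrightarrow> continuous_on (ival \<tau>) (variation_of_constants T \<xi> G)"
  using has_vector_derivative_variation_of_constants has_vector_derivative_continuous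
  unfolding continuous_on_eq_continuous_within by blast

lemma variation_of_constants_diff:
  assumes "t \<in> ival \<tau>" "continuous_on (ival \<tau>) G1" "continuous_on (ival \<tau>) G2"
  shows "variation_of_constants T \<xi>1 G1 t - variation_of_constants T \<xi>2 G2 t =
    variation_of_constants T (\<xi>1 - \<xi>2) (\<lambda>s. G1 s - G2 s) t"
proof -
  have "(\<lambda>s. T 0 s *v G s) integrable_on {0..t}" if "continuous_on (ival \<tau>) G" for G
    using continuous_on_subset[OF that ival_atLeastAtMost_subset[OF assms(1)]]
    by (intro integrable_continuous_interval continuous_on_transition_mult) auto
  from integral_diff[OF this[OF assms(2)] this[OF assms(3)]]
  have W: "integral {0..t} (\<lambda>s. T 0 s *v (G1 s - G2 s)) =
      integral {0..t} (\<lambda>s. T 0 s *v G1 s) - integral {0..t} (\<lambda>s. T 0 s *v G2 s)"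
    by (simp add: matrix_vector_mult_diff_distrib)
  have "integral {0..t} (\<lambda>s. T 0 s *v G1 s) - integral {0..t} (\<lambda>s. T 0 s *v G2 s) - (\<xi>1 - \<xi>2)
      = (integral {0..t} (\<lambda>s. T 0 s *v G1 s) - \<xi>1) - (integral {0..t} (\<lambda>s. T 0 s *v G2 s) - \<xi>2)"
    by (simp add: algebra_simps)
  then show ?thesis
    unfolding variation_of_constants_def W by (simp only: matrix_vector_mult_diff_distrib)
qed

lemma variation_of_constants_zero:
  assumes G: "continuous_on (ival \<tau>) G" and t: "t \<in> ival \<tau>"
  shows "variation_of_constants T 0 G t = integral {0..t} (\<lambda>s. T t s *v G s)"
proof -
  have "t \<ge> 0" using t ival_subset by auto
  have "(\<lambda>s. T 0 s *v G s) integrable_on {0..t}"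
    using continuous_on_subset[OF G ival_atLeastAtMost_subset[OF t]]
    by (intro integrable_continuous_interval continuous_on_transition_mult) auto
  from integral_linear[OF this matrix_vector_mul_bounded_linear, of "T t 0"]
  have "variation_of_constants T 0 G t = integral {0..t} (\<lambda>s. T t 0 *v (T 0 s *v G s))"
    by (simp add: variation_of_constants_def o_def)
  also have "\<dots> = integral {0..t} (\<lambda>s. T t s *v G s)"
    using transition_cocycle[of t 0, symmetric] \<open>t \<ge> 0\<close>
    by (intro integral_cong) (simp add: matrix_vector_mul_assoc)
  finally show ?thesis .
qed

lemma variation_of_constants_integral:
  assumes G: "continuous_on (ival \<tau>) G" and t: "t \<in> ival \<tau>"
    and int: "(\<lambda>s. T 0 s *v G s) integrable_on (ival \<tau> - {0..t})"
  shows "variation_of_constants T (integral (ival \<tau>) (\<lambda>s. T 0 s *v G s)) G t =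
    - integral (ival \<tau> - {0..t}) (\<lambda>s. T t s *v G s)"
proof -
  let ?F = "\<lambda>s. T 0 s *v G s" and ?R = "ival \<tau> - {0..t}"
  have "t \<ge> 0" using t ival_subset by auto
  have "?F integrable_on {0..t}"
    using continuous_on_subset[OF G ival_atLeastAtMost_subset[OF t]]
    by (intro integrable_continuous_interval continuous_on_transition_mult) auto
  from has_integral_Un[OF this[THEN integrable_integral] int[THEN integrable_integral]]
  have "integral (ival \<tau>) ?F = integral {0..t} ?F + integral ?R ?F"
    using ival_atLeastAtMost_subset[OF t] by (auto simp: Un_absorb1 intro: integral_unique)
  hence "variation_of_constants T (integral (ival \<tau>) ?F) G t = - (T t 0 *v integral ?R ?F)"
    by (simp add: variation_of_constants_def
        bounded_bilinear.minus_right[OF bounded_bilinear_matrix_vector_mult])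
  also have "T t 0 *v integral ?R ?F = integral ?R (\<lambda>s. T t 0 *v ?F s)"
    by (rule integral_linear[OF int matrix_vector_mul_bounded_linear, unfolded o_def, symmetric])
  also have "\<dots> = integral ?R (\<lambda>s. T t s *v G s)"
    using transition_cocycle[of t 0, symmetric] \<open>t \<ge> 0\<close> ival_subset
    by (intro integral_cong) (auto simp: matrix_vector_mul_assoc)
  finally show ?thesis .
qed

end

locale normed_linear_system = vector_norm nrm + linear_system A T
  for nrm :: "real^'n \<Rightarrow> real" and A :: "real \<Rightarrow> real^'n^'n"
    and T :: "real \<Rightarrow> real \<Rightarrow> real^'n^'n"
begin

lemma contraction_integral_bound:
  assumes contr: "\<And>t s. 0 \<le> s \<Longrightarrow> s \<le> t \<Longrightarrow> mnorm nrm (T t s) \<le> N * exp (- lam * (t - s))"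
    and "lam > 0" "N \<ge> 0" "t \<ge> 0"
    and G: "continuous_on {0..t} G" and M: "\<And>s. s \<in> {0..t} \<Longrightarrow> nrm (G s) \<le> M"
  shows "nrm (integral {0..t} (\<lambda>s. T t s *v G s)) \<le> N * M / lam"
proof -
  have "M \<ge> 0" using M[of 0] nrm_nonneg[of "G 0"] \<open>t \<ge> 0\<close> by simp
  have E: "((\<lambda>s. N * M * exp (- lam * (t - s))) has_integral
      N * M * ((1 - exp (- lam * t)) / lam)) {0..t}"
    using has_integral_mult_right[OF exp_growth_integral_atLeastAtMost[OF \<open>lam > 0\<close> \<open>t \<ge> 0\<close>]] .
  have "nrm (integral {0..t} (\<lambda>s. T t s *v G s))
      \<le> integral {0..t} (\<lambda>s. N * M * exp (- lam * (t - s)))"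
  proof (rule integrable_dominated_nrm(2))
    show "continuous_on {0..t} (\<lambda>s. T t s *v G s)"
      using G \<open>t \<ge> 0\<close> by (intro continuous_on_transition_mult) auto
    fix s assume s: "s \<in> {0..t}"
    have "nrm (T t s *v G s) \<le> mnorm nrm (T t s) * nrm (G s)" by (rule nrm_matrix_vector_mult_le)
    also have "\<dots> \<le> N * exp (- lam * (t - s)) * M"
      using contr[of s t] M[OF s] s \<open>N \<ge> 0\<close> nrm_nonneg by (intro mult_mono) auto
    finally show "nrm (T t s *v G s) \<le> N * M * exp (- lam * (t - s))" by (simp add: algebra_simps)
  qed (use E in auto)
  also have "\<dots> = N * M * ((1 - exp (- lam * t)) / lam)" by (rule integral_unique[OF E])
  also have "\<dots> \<le> N * M * (1 / lam)"
    using \<open>lam > 0\<close> \<open>N \<ge> 0\<close> \<open>M \<ge> 0\<close> by (intro mult_left_mono divide_right_mono) auto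
  finally show ?thesis by simp
qed

lemma expansion_integral_bound:
  assumes exp: "\<And>t s. 0 \<le> t \<Longrightarrow> t \<le> s \<Longrightarrow> mnorm nrm (T t s) \<le> N * exp (- lam * (s - t))"
    and "lam > 0" "N \<ge> 0" "t \<ge> 0" "M \<ge> 0" and S: "S \<in> sets lebesgue" "S \<subseteq> {t..}"
    and G: "continuous_on S G" and M: "\<And>s. s \<in> S \<Longrightarrow> nrm (G s) \<le> M"
  shows "(\<lambda>s. T t s *v G s) integrable_on S"
    and "nrm (integral S (\<lambda>s. T t s *v G s)) \<le> N * M / lam"
proof -
  let ?E = "\<lambda>s. N * M * exp (- lam * (s - t))"
  have E: "?E integrable_on S" "integral S ?E \<le> N * M / lam"
    using exp_decay_integrable_on[OF S \<open>lam > 0\<close>] \<open>N \<ge> 0\<close> \<open>M \<ge> 0\<close> by auto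
  have H: "continuous_on S (\<lambda>s. T t s *v G s)"
    using G S \<open>t \<ge> 0\<close> by (intro continuous_on_transition_mult) auto
  have bound: "nrm (T t s *v G s) \<le> ?E s" if s: "s \<in> S" for s
  proof -
    have "nrm (T t s *v G s) \<le> mnorm nrm (T t s) * nrm (G s)" by (rule nrm_matrix_vector_mult_le)
    also have "\<dots> \<le> N * exp (- lam * (s - t)) * M"
      using exp[of t s] M[OF s] s S \<open>t \<ge> 0\<close> \<open>N \<ge> 0\<close> nrm_nonneg by (intro mult_mono) auto
    finally show ?thesis by (simp add: algebra_simps)
  qed
  show "(\<lambda>s. T t s *v G s) integrable_on S"
    using integrable_dominated_nrm(1)[OF S(1) H E(1) bound] .
  show "nrm (integral S (\<lambda>s. T t s *v G s)) \<le> N * M / lam"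
    using integrable_dominated_nrm(2)[OF S(1) H E(1) bound] E(2) by linarith
qed

end

section \<open>Bounded solutions under exponential contraction or expansion\<close>

lemma exp_dichotomy_constants_pos: "exp_dichotomy nrm T P N lam \<Longrightarrow> N > 0 \<and> lam > 0"
  unfolding exp_dichotomy_def by blast

lemma exp_contraction_bound:
  "exp_contraction nrm T N lam \<Longrightarrow> 0 \<le> s \<Longrightarrow> s \<le> t \<Longrightarrow>
    mnorm nrm (T t s) \<le> N * exp (- lam * (t - s))"
  unfolding exp_contraction_def exp_dichotomy_def by simp

lemma exp_expansion_bound:
  "exp_expansion nrm T N lam \<Longrightarrow> 0 \<le> t \<Longrightarrow> t \<le> s \<Longrightarrow>
    mnorm nrm (T t s) \<le> N * exp (- lam * (s - t))"
  unfolding exp_expansion_def exp_dichotomy_def by simp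

definition bounded_solution_selector ::
  "(real^'n \<Rightarrow> real) \<Rightarrow> (real \<Rightarrow> real \<Rightarrow> real^'n^'n) \<Rightarrow> real \<Rightarrow> real \<Rightarrow> real set
    \<Rightarrow> ((real \<Rightarrow> real^'n) \<Rightarrow> real^'n) \<Rightarrow> bool" where
  "bounded_solution_selector nrm T N lam I \<Xi> \<longleftrightarrow>
     (\<forall>G M t. continuous_on I G \<longrightarrow> (\<forall>s\<in>I. nrm (G s) \<le> M) \<longrightarrow> t \<in> I \<longrightarrow>
        nrm (variation_of_constants T (\<Xi> G) G t) \<le> N * M / lam) \<and>
     (\<forall>G1 G2 M. continuous_on I G1 \<longrightarrow> continuous_on I G2 \<longrightarrow>
        (\<forall>s\<in>I. nrm (G1 s) \<le> M \<and> nrm (G2 s) \<le> M) \<longrightarrow> \<Xi> (\<lambda>s. G1 s - G2 s) = \<Xi> G1 - \<Xi> G2)"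

lemma bounded_solution_selector_bound:
  "bounded_solution_selector nrm T N lam I \<Xi> \<Longrightarrow> continuous_on I G \<Longrightarrow> \<forall>s\<in>I. nrm (G s) \<le> M \<Longrightarrow>
    t \<in> I \<Longrightarrow> nrm (variation_of_constants T (\<Xi> G) G t) \<le> N * M / lam"
  unfolding bounded_solution_selector_def by blast

lemma bounded_solution_selector_diff:
  "bounded_solution_selector nrm T N lam I \<Xi> \<Longrightarrow> continuous_on I G1 \<Longrightarrow> continuous_on I G2 \<Longrightarrow>
    \<forall>s\<in>I. nrm (G1 s) \<le> M \<and> nrm (G2 s) \<le> M \<Longrightarrow> \<Xi> (\<lambda>s. G1 s - G2 s) = \<Xi> G1 - \<Xi> G2"
  unfolding bounded_solution_selector_def by blast

context normed_linear_system
begin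

lemma contraction_solution_selector:
  assumes "exp_contraction nrm T N lam"
  shows "bounded_solution_selector nrm T N lam (ival \<tau>) (\<lambda>G. 0)"
  unfolding bounded_solution_selector_def
proof (intro conjI allI impI)
  fix G M t assume G: "continuous_on (ival \<tau>) G" "\<forall>s\<in>ival \<tau>. nrm (G s) \<le> M" and t: "t \<in> ival \<tau>"
  have "nrm (integral {0..t} (\<lambda>s. T t s *v G s)) \<le> N * M / lam"
    using exp_dichotomy_constants_pos[of nrm T "\<lambda>_. mat 1" N lam] assms t G
      continuous_on_subset[OF G(1) ival_atLeastAtMost_subset[OF t]] ival_atLeastAtMost_subset[OF t]
      ival_subset
    by (intro contraction_integral_bound[OF exp_contraction_bound[OF assms]])
       (auto simp: exp_contraction_def)
  thus "nrm (variation_of_constants T 0 G t) \<le> N * M / lam"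
    using variation_of_constants_zero[OF G(1) t] by simp
qed simp

lemma expansion_solution_selector:
  assumes "exp_expansion nrm T N lam"
  shows "bounded_solution_selector nrm T N lam (ival \<tau>) (\<lambda>G. integral (ival \<tau>) (\<lambda>s. T 0 s *v G s))"
proof -
  have "N > 0" "lam > 0"
    using exp_dichotomy_constants_pos assms unfolding exp_expansion_def by blast+
  have int: "(\<lambda>s. T 0 s *v G s) integrable_on S"
    if "S \<subseteq> ival \<tau>" "S \<in> sets lebesgue" "continuous_on (ival \<tau>) G" "\<forall>s\<in>ival \<tau>. nrm (G s) \<le> M"
    for S G M
  proof (rule expansion_integral_bound(1)[OF exp_expansion_bound[OF assms] \<open>lam > 0\<close>])
    show "nrm (G s) \<le> max M 0" if "s \<in> S" for s
      using that \<open>S \<subseteq> ival \<tau>\<close> \<open>\<forall>s\<in>ival \<tau>. nrm (G s) \<le> M\<close> by fastforce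
  qed (use that ival_subset \<open>N > 0\<close> continuous_on_subset[OF that(3)] in auto)
  show ?thesis
    unfolding bounded_solution_selector_def
  proof (intro conjI allI impI)
    fix G M t assume G: "continuous_on (ival \<tau>) G" "\<forall>s\<in>ival \<tau>. nrm (G s) \<le> M"
      and t: "t \<in> ival \<tau>"
    let ?R = "ival \<tau> - {0..t}"
    have R: "?R \<in> sets lebesgue" "?R \<subseteq> {t..}" "?R \<subseteq> ival \<tau>"
      using ival_sets_lebesgue ival_subset[of \<tau>] by auto
    have "nrm (integral ?R (\<lambda>s. T t s *v G s)) \<le> N * M / lam"
      using t G R ival_subset nrm_nonneg[of "G t"] \<open>N > 0\<close>
      by (intro expansion_integral_bound(2)[OF exp_expansion_bound[OF assms] \<open>lam > 0\<close>]
          continuous_on_subset[OF G(1)]) auto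
    thus "nrm (variation_of_constants T (integral (ival \<tau>) (\<lambda>s. T 0 s *v G s)) G t) \<le> N * M / lam"
      using variation_of_constants_integral[OF G(1) t int[OF R(3,1) G]] by (simp add: nrm_minus)
  next
    fix G1 G2 M assume G: "continuous_on (ival \<tau>) G1" "continuous_on (ival \<tau>) G2"
      "\<forall>s\<in>ival \<tau>. nrm (G1 s) \<le> M \<and> nrm (G2 s) \<le> M"
    have "\<forall>s\<in>ival \<tau>. nrm (G1 s) \<le> M" "\<forall>s\<in>ival \<tau>. nrm (G2 s) \<le> M" using G(3) by auto
    from integral_diff[OF int[OF subset_refl ival_sets_lebesgue G(1) this(1)]
        int[OF subset_refl ival_sets_lebesgue G(2) this(2)]]
    show "integral (ival \<tau>) (\<lambda>s. T 0 s *v (G1 s - G2 s)) =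
        integral (ival \<tau>) (\<lambda>s. T 0 s *v G1 s) - integral (ival \<tau>) (\<lambda>s. T 0 s *v G2 s)"
      by (simp add: matrix_vector_mult_diff_distrib)
  qed
qed

end

section \<open>Shadowing of pseudosolutions\<close>

lemma continuous_on_compose_time_dependent:
  assumes f: "continuous_on ({0..} \<times> UNIV) (\<lambda>(t, x). f t x)"
    and "S \<subseteq> {0..}" and g: "continuous_on S g"
  shows "continuous_on S (\<lambda>s. f s (g s))"
proof -
  have "continuous_on S (\<lambda>s. (\<lambda>(t, x). f t x) (s, g s))"
    by (rule continuous_on_compose2[OF f]) (use assms in \<open>auto intro!: continuous_intros\<close>)
  thus ?thesis by simp
qed

context vector_norm
begin

lemma lipschitz_nbhd_shift:
  assumes lip: "\<forall>t\<ge>0. \<forall>x1\<in>nbhd nrm \<delta> H. \<forall>x2\<in>nbhd nrm \<delta> H.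
      nrm (f t x1 - f t x2) \<le> L * nrm (x1 - x2)"
    and "t \<ge> 0" "x \<in> H" "nrm w1 \<le> \<delta>" "nrm w2 \<le> \<delta>"
  shows "nrm (f t (x + w1) - f t (x + w2)) \<le> L * nrm (w1 - w2)"
proof -
  have "x + w \<in> nbhd nrm \<delta> H" if "nrm w \<le> \<delta>" for w
    using \<open>x \<in> H\<close> that unfolding nbhd_def by (intro CollectI bexI[of _ x]) auto
  hence "nrm (f t (x + w1) - f t (x + w2)) \<le> L * nrm ((x + w1) - (x + w2))"
    using lip assms(2,4,5) by blast
  thus ?thesis by simp
qed

lemma perturbed_forcing_le:
  assumes lip: "\<forall>t\<ge>0. \<forall>x1\<in>nbhd nrm \<delta> H. \<forall>x2\<in>nbhd nrm \<delta> H.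
      nrm (f t x1 - f t x2) \<le> L * nrm (x1 - x2)"
    and "t \<ge> 0" "x \<in> H" "0 \<le> L" "nrm w \<le> R" "R \<le> \<delta>" "nrm e \<le> \<epsilon>"
  shows "nrm (f t (x + w) - f t x - e) \<le> L * R + \<epsilon>"
proof -
  have "nrm (f t (x + w) - f t x - e) \<le> nrm (f t (x + w) - f t (x + 0)) + nrm e"
    using nrm_triangle[of "f t (x + w) - f t x" "- e"] by (simp add: nrm_minus)
  also have "\<dots> \<le> L * nrm (w - 0) + \<epsilon>"
    using lipschitz_nbhd_shift[OF lip, of t x w 0] assms nrm_nonneg[of w] by (intro add_mono) auto
  also have "\<dots> \<le> L * R + \<epsilon>" using assms by (simp add: mult_left_mono)
  finally show ?thesis .
qed

end

context normed_linear_system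
begin

lemma has_vector_derivative_fixpoint:
  assumes "continuous_on (ival \<tau>) G" "\<forall>s\<in>ival \<tau>. variation_of_constants T \<xi> G s = z s"
    and t: "t \<in> ival \<tau>"
  shows "(z has_vector_derivative A t *v z t + G t) (at t within ival \<tau>)"
proof -
  have "(variation_of_constants T \<xi> G has_vector_derivative A t *v z t + G t) (at t within ival \<tau>)"
    using has_vector_derivative_variation_of_constants[OF assms(1) t, where \<xi> = \<xi>] assms(2) t
    by simp
  thus ?thesis
    by (rule has_vector_derivative_transform_within[OF _ zero_less_one t]) (use assms(2) in auto)
qed

text \<open>The Lyapunov--Perron step: a bounded, Lipschitz perturbation \<open>P\<close> of the linear equation
  is absorbed by the contraction \<open>z \<mapsto> variation_of_constants T (\<Xi> (P z)) (P z)\<close>.\<close>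
lemma perturbed_fixpoint:
  assumes \<Xi>: "bounded_solution_selector nrm T N lam (ival \<tau>) \<Xi>"
    and "lam > 0" "N \<ge> 0" "0 \<le> L" "N * L < lam" "0 \<le> R" "N * B / lam \<le> R"
    and P_cont: "\<And>z. continuous_on (ival \<tau>) z \<Longrightarrow> continuous_on (ival \<tau>) (P z)"
    and P_bound: "\<And>z. \<forall>t\<in>ival \<tau>. nrm (z t) \<le> R \<Longrightarrow> \<forall>s\<in>ival \<tau>. nrm (P z s) \<le> B"
    and P_lip: "\<And>z w d. \<forall>t\<in>ival \<tau>. nrm (z t) \<le> R \<Longrightarrow> \<forall>t\<in>ival \<tau>. nrm (w t) \<le> R \<Longrightarrow>
      \<forall>t\<in>ival \<tau>. nrm (z t - w t) \<le> d \<Longrightarrow> \<forall>s\<in>ival \<tau>. nrm (P z s - P w s) \<le> L * d"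
  obtains z where "continuous_on (ival \<tau>) z" "\<forall>t\<in>ival \<tau>. nrm (z t) \<le> R"
    "\<forall>t\<in>ival \<tau>. variation_of_constants T (\<Xi> (P z)) (P z) t = z t"
proof (rule contraction_fixpoint)
  show "0 \<le> N * L / lam" "N * L / lam < 1" using assms by auto
  show "0 \<le> R" by fact
  fix z assume z: "continuous_on (ival \<tau>) z" "\<forall>t\<in>ival \<tau>. nrm (z t) \<le> R"
  have "nrm (variation_of_constants T (\<Xi> (P z)) (P z) t) \<le> R" if "t \<in> ival \<tau>" for t
    using bounded_solution_selector_bound[OF \<Xi> P_cont[OF z(1)] P_bound[OF z(2)] that]
      \<open>N * B / lam \<le> R\<close> by linarith
  then show "continuous_on (ival \<tau>) (variation_of_constants T (\<Xi> (P z)) (P z)) \<and>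
      (\<forall>t\<in>ival \<tau>. nrm (variation_of_constants T (\<Xi> (P z)) (P z) t) \<le> R)"
    using continuous_on_variation_of_constants[OF P_cont[OF z(1)]] by blast
  fix w d assume w: "continuous_on (ival \<tau>) w" "\<forall>t\<in>ival \<tau>. nrm (w t) \<le> R"
    and d: "\<forall>t\<in>ival \<tau>. nrm (z t - w t) \<le> d"
  have PzPw: "continuous_on (ival \<tau>) (\<lambda>s. P z s - P w s)"
    using P_cont[OF z(1)] P_cont[OF w(1)] by (rule continuous_on_diff)
  have \<Xi>_diff: "\<Xi> (\<lambda>s. P z s - P w s) = \<Xi> (P z) - \<Xi> (P w)"
    using bounded_solution_selector_diff[OF \<Xi> P_cont[OF z(1)] P_cont[OF w(1)], of B]
      P_bound[OF z(2)] P_bound[OF w(2)] by blast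
  show "\<forall>t\<in>ival \<tau>. nrm (variation_of_constants T (\<Xi> (P z)) (P z) t -
      variation_of_constants T (\<Xi> (P w)) (P w) t) \<le> N * L / lam * d"
  proof
    fix t assume t: "t \<in> ival \<tau>"
    have "variation_of_constants T (\<Xi> (P z)) (P z) t - variation_of_constants T (\<Xi> (P w)) (P w) t
        = variation_of_constants T (\<Xi> (\<lambda>s. P z s - P w s)) (\<lambda>s. P z s - P w s) t"
      using variation_of_constants_diff[OF t P_cont[OF z(1)] P_cont[OF w(1)]] \<Xi>_diff by simp
    also have "nrm \<dots> \<le> N * (L * d) / lam"
      by (rule bounded_solution_selector_bound[OF \<Xi> PzPw P_lip[OF z(2) w(2) d] t])
    finally show "nrm (variation_of_constants T (\<Xi> (P z)) (P z) t -
        variation_of_constants T (\<Xi> (P w)) (P w) t) \<le> N * L / lam * d" by simp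
  qed
qed (rule that)

lemma exists_bounded_solution_selector:
  assumes "exp_contraction nrm T N lam \<or> exp_expansion nrm T N lam"
  obtains \<Xi> where "bounded_solution_selector nrm T N lam (ival \<tau>) \<Xi>"
  using contraction_solution_selector expansion_solution_selector assms by blast

lemma pseudosolution_shadowed:
  assumes dichotomy: "exp_contraction nrm T N lam \<or> exp_expansion nrm T N lam"
    and "0 \<le> L" "N * L < lam"
    and f: "continuous_on ({0..} \<times> UNIV) (\<lambda>(t, x). f t x)"
    and lip: "\<forall>t\<ge>0. \<forall>x1\<in>nbhd nrm \<delta> H. \<forall>x2\<in>nbhd nrm \<delta> H.
      nrm (f t x1 - f t x2) \<le> L * nrm (x1 - x2)"
    and y: "pseudosol_le nrm (\<lambda>t x. A t *v x + f t x) \<tau> \<epsilon> y" "\<forall>t\<in>ival \<tau>. y t \<in> H"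
    and "0 \<le> \<epsilon>" "N / (lam - N * L) * \<epsilon> \<le> \<delta>"
  shows "\<exists>x. is_solution (\<lambda>t x. A t *v x + f t x) \<tau> x \<and>
    (\<forall>t\<in>ival \<tau>. nrm (x t - y t) \<le> N / (lam - N * L) * \<epsilon>)"
proof -
  obtain \<Xi> where \<Xi>: "bounded_solution_selector nrm T N lam (ival \<tau>) \<Xi>"
    using exists_bounded_solution_selector[OF dichotomy] .
  have "N > 0" "lam > 0"
    using dichotomy exp_dichotomy_constants_pos
    unfolding exp_contraction_def exp_expansion_def by blast+
  define R where "R = N / (lam - N * L) * \<epsilon>"
  obtain y' where y': "continuous_on (ival \<tau>) y'"
    "\<forall>t\<in>ival \<tau>. (y has_vector_derivative y' t) (at t within ival \<tau>)"
    "\<forall>t\<in>ival \<tau>. nrm (y' t - (A t *v y t + f t (y t))) \<le> \<epsilon>"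
    using y(1) unfolding pseudosol_le_def by blast
  have y_cont: "continuous_on (ival \<tau>) y"
    using y'(2) has_vector_derivative_continuous continuous_on_eq_continuous_within by blast
  define h where "h s = y' s - (A s *v y s + f s (y s))" for s
  define P where "P z s = f s (y s + z s) - f s (y s) - h s" for z s
  have f_cont: "continuous_on (ival \<tau>) g \<Longrightarrow> continuous_on (ival \<tau>) (\<lambda>s. f s (g s))" for g
    by (rule continuous_on_compose_time_dependent[OF f ival_subset])
  have P_cont: "continuous_on (ival \<tau>) (P z)" if "continuous_on (ival \<tau>) z" for z
    using y_cont y' continuous_on_subset[OF continuous_coefficient ival_subset] that
    unfolding P_def h_def
    by (intro continuous_intros f_cont
        bounded_bilinear.continuous_on[OF bounded_bilinear_matrix_vector_mult])
  have "R \<le> \<delta>" unfolding R_def by fact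
  obtain z where z: "continuous_on (ival \<tau>) z" "\<forall>t\<in>ival \<tau>. nrm (z t) \<le> R"
    "\<forall>t\<in>ival \<tau>. variation_of_constants T (\<Xi> (P z)) (P z) t = z t"
  proof (rule perturbed_fixpoint[OF \<Xi> \<open>lam > 0\<close> _ \<open>0 \<le> L\<close> \<open>N * L < lam\<close>, of R "L * R + \<epsilon>" P])
    show "0 \<le> R" unfolding R_def using \<open>N > 0\<close> \<open>N * L < lam\<close> \<open>0 \<le> \<epsilon>\<close> by simp
    have "(lam - N * L) * R = N * \<epsilon>" unfolding R_def using \<open>N * L < lam\<close> by simp
    hence "N * (L * R + \<epsilon>) = lam * R" by (simp add: algebra_simps)
    thus "N * (L * R + \<epsilon>) / lam \<le> R" using \<open>lam > 0\<close> by simp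
    fix z assume z: "\<forall>t\<in>ival \<tau>. nrm (z t) \<le> R"
    show "\<forall>s\<in>ival \<tau>. nrm (P z s) \<le> L * R + \<epsilon>"
      using perturbed_forcing_le[OF lip _ _ \<open>0 \<le> L\<close> _ \<open>R \<le> \<delta>\<close>] z y(2) y'(3) ival_subset
      unfolding P_def h_def by blast
    fix w d assume w: "\<forall>t\<in>ival \<tau>. nrm (w t) \<le> R" and d: "\<forall>t\<in>ival \<tau>. nrm (z t - w t) \<le> d"
    show "\<forall>s\<in>ival \<tau>. nrm (P z s - P w s) \<le> L * d"
    proof
      fix s assume s: "s \<in> ival \<tau>"
      have "nrm (P z s - P w s) \<le> L * nrm (z s - w s)"
        using lipschitz_nbhd_shift[OF lip, of s "y s" "z s" "w s"] z w s y(2) ival_subset \<open>R \<le> \<delta>\<close>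
        by (force simp: P_def)
      also have "\<dots> \<le> L * d" using d s \<open>0 \<le> L\<close> by (simp add: mult_left_mono)
      finally show "nrm (P z s - P w s) \<le> L * d" .
    qed
  qed (use that P_cont \<open>N > 0\<close> in auto)
  have "((\<lambda>t. y t + z t) has_vector_derivative A t *v (y t + z t) + f t (y t + z t))
      (at t within ival \<tau>)" if t: "t \<in> ival \<tau>" for t
    using has_vector_derivative_add[OF y'(2)[rule_format, OF t]
        has_vector_derivative_fixpoint[OF P_cont[OF z(1)] z(3) t]]
    by (simp add: P_def h_def matrix_vector_right_distrib algebra_simps)
  then show ?thesis
    using z(2) unfolding is_solution_def R_def by (intro exI[of _ "\<lambda>t. y t + z t"]) auto
qed

end

theorem theorem3:
  fixes nrm :: "real^'n \<Rightarrow> real"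
    and H :: "(real^'n) set"
    and A :: "real \<Rightarrow> real^'n^'n"
    and T :: "real \<Rightarrow> real \<Rightarrow> real^'n^'n"
    and f :: "real \<Rightarrow> real^'n \<Rightarrow> real^'n"
    and N lam \<delta> L :: real
  assumes "is_norm nrm"
    and "H \<noteq> {}"
    and "continuous_on {0..} A"
    and "continuous_on ({0..} \<times> UNIV) (\<lambda>(t, x). f t x)"
    and "is_transition_matrix A T"
    and "exp_contraction nrm T N lam \<or> exp_expansion nrm T N lam"
    and "\<delta> > 0" and "L > 0"
    and "\<forall>t\<ge>0. \<forall>x1\<in>nbhd nrm \<delta> H. \<forall>x2\<in>nbhd nrm \<delta> H.
           nrm (f t x1 - f t x2) \<le> L * nrm (x1 - x2)"
    and "L < lam / N"
  shows "cond_lip_shadowing nrm (\<lambda>t x. A t *v x + f t x) H"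
proof -
  interpret normed_linear_system nrm A T
    using assms(1,3,5) by unfold_locales
  have "N > 0" "lam > 0"
    using assms(6) exp_dichotomy_constants_pos
    unfolding exp_contraction_def exp_expansion_def by blast+
  have "N * L < lam" using assms(10) \<open>N > 0\<close> by (simp add: field_simps)
  define \<kappa> where "\<kappa> = N / (lam - N * L)"
  have "\<kappa> > 0" unfolding \<kappa>_def using \<open>N > 0\<close> \<open>N * L < lam\<close> by simp
  show ?thesis
    unfolding cond_lip_shadowing_def
  proof (rule exI[of _ "\<delta> / \<kappa>"], rule exI[of _ \<kappa>], intro conjI allI impI)
    fix \<epsilon> \<tau> y assume asm: "0 < \<epsilon> \<and> \<epsilon> \<le> \<delta> / \<kappa> \<and> 0 < \<tau> \<and>
        pseudosol_le nrm (\<lambda>t x. A t *v x + f t x) \<tau> \<epsilon> y \<and> (\<forall>t\<in>ival \<tau>. y t \<in> H)"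
    then have "\<kappa> * \<epsilon> \<le> \<delta>" using \<open>\<kappa> > 0\<close> by (simp add: pos_le_divide_eq mult.commute)
    with asm show "\<exists>x. is_solution (\<lambda>t x. A t *v x + f t x) \<tau> x \<and>
        (\<forall>t\<in>ival \<tau>. nrm (x t - y t) \<le> \<kappa> * \<epsilon>)"
      unfolding \<kappa>_def
      by (intro pseudosolution_shadowed[OF assms(6) _ \<open>N * L < lam\<close> assms(4,9)])
         (use assms(8) in \<open>auto simp: field_simps\<close>)
  qed (use \<open>\<kappa> > 0\<close> assms(7) in auto)
qed

end
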